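(* Let $\phi:M_D(\mathbb{C})\to M_D(\mathbb{C})$ be a primitive Schwarz map. Then $\phi$ has spectral radius $1$ if and only if $\phi$ is unital, i.e. $\phi(I)=I$.
   Context: $M_D(\mathbb{C})$ is the algebra of complex $D\times D$ matrices. A linear map $\phi$ on $M_D(\mathbb{C})$ is a Schwarz map if $\phi(a^*a)\ge\phi(a)^*\phi(a)$ for all $a$ (in the Loewner order); unitality is not part of this definition. $\phi$ is primitive if there is $n\in\mathbb{N}$ such that $\phi^n$ maps every nonzero positive semidefinite matrix to a positive definite matrix. The spectral radius is that of $\phi$ as a linear operator on the vector space $M_D(\mathbb{C})$. *)

theory Defs
  imports "Jordan_Normal_Form.Schur_Decomposition"
begin

text \<open>A map phi on M_D(C) is a function complex mat => complex mat mapping the carrier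
  into itself; linearity is required on the carrier.\<close>

definition linear_on_Mat :: "nat \<Rightarrow> (complex mat \<Rightarrow> complex mat) \<Rightarrow> bool" where
  "linear_on_Mat D \<phi> \<longleftrightarrow>
     (\<forall>A \<in> carrier_mat D D. \<phi> A \<in> carrier_mat D D) \<and>
     (\<forall>A \<in> carrier_mat D D. \<forall>B \<in> carrier_mat D D. \<phi> (A + B) = \<phi> A + \<phi> B) \<and>
     (\<forall>c. \<forall>A \<in> carrier_mat D D. \<phi> (c \<cdot>\<^sub>m A) = c \<cdot>\<^sub>m \<phi> A)"

definition psd_mat :: "nat \<Rightarrow> complex mat \<Rightarrow> bool" where
  "psd_mat D A \<longleftrightarrow> A \<in> carrier_mat D D \<and> mat_adjoint A = A \<and>
     (\<forall>v \<in> carrier_vec D. Re (conjugate v \<bullet> (A *\<^sub>v v)) \<ge> 0)"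

definition pd_mat :: "nat \<Rightarrow> complex mat \<Rightarrow> bool" where
  "pd_mat D A \<longleftrightarrow> A \<in> carrier_mat D D \<and> mat_adjoint A = A \<and>
     (\<forall>v \<in> carrier_vec D. v \<noteq> 0\<^sub>v D \<longrightarrow> Re (conjugate v \<bullet> (A *\<^sub>v v)) > 0)"

definition loewner_ge :: "nat \<Rightarrow> complex mat \<Rightarrow> complex mat \<Rightarrow> bool" where
  "loewner_ge D A B \<longleftrightarrow> psd_mat D (A - B)"

definition schwarz_map :: "nat \<Rightarrow> (complex mat \<Rightarrow> complex mat) \<Rightarrow> bool" where
  "schwarz_map D \<phi> \<longleftrightarrow> linear_on_Mat D \<phi> \<and>
     (\<forall>a \<in> carrier_mat D D.
        loewner_ge D (\<phi> (mat_adjoint a * a)) (mat_adjoint (\<phi> a) * \<phi> a))"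

definition primitive_map :: "nat \<Rightarrow> (complex mat \<Rightarrow> complex mat) \<Rightarrow> bool" where
  "primitive_map D \<phi> \<longleftrightarrow>
     (\<exists>n::nat. \<forall>A. psd_mat D A \<and> A \<noteq> 0\<^sub>m D D \<longrightarrow> pd_mat D ((\<phi> ^^ n) A))"

text \<open>Eigenvalues of phi as a linear operator on the vector space M_D(C), and its
  spectral radius (finite-dimensional, so spectrum = set of eigenvalues).\<close>
definition map_eigenvalue :: "nat \<Rightarrow> (complex mat \<Rightarrow> complex mat) \<Rightarrow> complex \<Rightarrow> bool" where
  "map_eigenvalue D \<phi> l \<longleftrightarrow>
     (\<exists>X \<in> carrier_mat D D. X \<noteq> 0\<^sub>m D D \<and> \<phi> X = l \<cdot>\<^sub>m X)"

definition map_spectral_radius :: "nat \<Rightarrow> (complex mat \<Rightarrow> complex mat) \<Rightarrow> real" where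
  "map_spectral_radius D \<phi> = Sup {cmod l | l. map_eigenvalue D \<phi> l}"

end

(*
  A Schwarz map is positive: a positive semidefinite matrix splits, column by column, into
  rank-one pieces c c* = b* b, and the Schwarz inequality makes phi(b* b) positive. Hence phi and
  its powers are monotone for the Loewner order. Iterating the Schwarz inequality at an
  eigenvector X with eigenvalue mu gives |mu|^(2k) X* X <= phi^k(X* X) <= t phi^k(1), so
  phi(1) <= c 1 forces |mu|^2 <= c. At a = 1 the Schwarz inequality gives phi(1) <= 1; thus a
  unital phi has spectral radius 1, the eigenvalue 1 being attained. If phi is not unital,
  1 - phi(1) is positive and nonzero, so by primitivity phi^n(1 - phi(1)) >= e 1 for some e > 0,
  i.e. phi^(n+1)(1) <= (1 - e) 1, and every eigenvalue has modulus at most (1 - e)^(1/(2n+2)) < 1.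
*)

theory Submission
  imports Defs "Jordan_Normal_Form.Spectral_Radius"
begin

section \<open>Sesquilinear forms of matrices\<close>

text \<open>Vectors are functions \<open>nat \<Rightarrow> complex\<close> of which only the first \<open>D\<close> entries matter, so
  that the calculus of \<open>qform D A x y = \<langle>x, A y\<rangle>\<close> needs no carrier conditions.\<close>

definition qform :: "nat \<Rightarrow> complex mat \<Rightarrow> (nat \<Rightarrow> complex) \<Rightarrow> (nat \<Rightarrow> complex) \<Rightarrow> complex" where
  "qform D A x y = (\<Sum>i<D. \<Sum>j<D. cnj (x i) * A $$ (i,j) * y j)"

definition sqnorm :: "nat \<Rightarrow> (nat \<Rightarrow> complex) \<Rightarrow> real" where
  "sqnorm D x = (\<Sum>i<D. (cmod (x i))\<^sup>2)"

definition mat_app :: "nat \<Rightarrow> complex mat \<Rightarrow> (nat \<Rightarrow> complex) \<Rightarrow> nat \<Rightarrow> complex" where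
  "mat_app D A x = (\<lambda>i. \<Sum>j<D. A $$ (i,j) * x j)"

definition entry_norm :: "nat \<Rightarrow> complex mat \<Rightarrow> real" where
  "entry_norm D A = (\<Sum>i<D. \<Sum>j<D. cmod (A $$ (i,j)))"

definition hermitian_mat :: "nat \<Rightarrow> complex mat \<Rightarrow> bool" where
  "hermitian_mat D A \<longleftrightarrow> (\<forall>i<D. \<forall>j<D. A $$ (j,i) = cnj (A $$ (i,j)))"

lemma mat_adjoint_carrier [simp]: "A \<in> carrier_mat n m \<Longrightarrow> mat_adjoint A \<in> carrier_mat m n"
  unfolding mat_adjoint_def by auto

lemma mat_adjoint_dim [simp]:
  "dim_row (mat_adjoint A) = dim_col A" "dim_col (mat_adjoint A) = dim_row A"
  unfolding mat_adjoint_def by auto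

lemma mat_adjoint_index [simp]:
  "i < dim_col A \<Longrightarrow> j < dim_row A \<Longrightarrow> mat_adjoint A $$ (i,j) = cnj (A $$ (j,i))"
  unfolding mat_adjoint_def by (simp add: mat_of_rows_index)

lemma adjoint_mult_carrier [simp]: "a \<in> carrier_mat D D \<Longrightarrow> mat_adjoint a * a \<in> carrier_mat D D"
  by (metis mat_adjoint_carrier mult_carrier_mat)

lemma mat_adjoint_one: "mat_adjoint (1\<^sub>m D) = (1\<^sub>m D :: complex mat)"
  by (intro eq_matI) auto

lemma mat_adjoint_smult: "X \<in> carrier_mat D D \<Longrightarrow> mat_adjoint (c \<cdot>\<^sub>m X) = cnj c \<cdot>\<^sub>m mat_adjoint X"
  by (intro eq_matI) auto

lemma one_smult_mat [simp]: "(1 :: 'a :: ring_1) \<cdot>\<^sub>m A = A"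
  by (intro eq_matI) auto

lemma cnj_mult_self: "cnj z * z = of_real ((cmod z)\<^sup>2)"
  using complex_norm_square[of z] by (simp add: mult.commute)

lemma quadratic_nonneg_imp_le:
  fixes a b g :: real
  assumes b: "0 \<le> b" and nonneg: "\<And>t. 0 \<le> a - 2 * t * g + t\<^sup>2 * g * b"
  shows "g \<le> a * b"
proof (cases "b = 0")
  case True
  have "g \<le> 0"
  proof (rule ccontr)
    assume "\<not> g \<le> 0"
    then show False
      using nonneg[of "(a + 1) / (2 * g)"] True by (simp add: field_simps)
  qed
  then show ?thesis
    using True by simp
next
  case False
  then show ?thesis
    using nonneg[of "1 / b"] b by (simp add: field_simps power2_eq_square)
qed

lemma le_of_power_bounded:
  fixes r c y t :: real
  assumes c: "0 < c" and y: "0 < y" and bound: "\<And>k. r ^ k * y \<le> t * c ^ k"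
  shows "r \<le> c"
proof (rule ccontr)
  assume "\<not> r \<le> c"
  then have "1 < r / c"
    using c by simp
  then obtain k where "t / y < (r / c) ^ k"
    using real_arch_pow by blast
  moreover have "(r / c) ^ k * y \<le> t"
    using bound[of k] c by (simp add: field_simps)
  ultimately show False
    using y by (simp add: field_simps)
qed

lemma sqnorm_nonneg: "0 \<le> sqnorm D x"
  unfolding sqnorm_def by (auto intro: sum_nonneg)

lemma entry_norm_nonneg: "0 \<le> entry_norm D A"
  unfolding entry_norm_def by (intro sum_nonneg) auto

lemma sqnorm_pos_iff: "0 < sqnorm D x \<longleftrightarrow> (\<exists>i<D. x i \<noteq> 0)"
proof -
  have "sqnorm D x = 0 \<longleftrightarrow> (\<forall>i<D. x i = 0)"
    unfolding sqnorm_def by (subst sum_nonneg_eq_0_iff) auto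
  then show ?thesis
    using sqnorm_nonneg[of D x] by force
qed

lemma nonzero_mat_obtain_entry:
  assumes "X \<in> carrier_mat D D" "X \<noteq> 0\<^sub>m D D"
  obtains i j where "i < D" "j < D" "X $$ (i,j) \<noteq> 0"
  using assms by (metis carrier_matD(1,2) eq_matI index_zero_mat)

lemma hermitian_mat_iff_adjoint:
  assumes A: "A \<in> carrier_mat D D"
  shows "mat_adjoint A = A \<longleftrightarrow> hermitian_mat D A"
  unfolding hermitian_mat_def
proof
  assume "mat_adjoint A = A"
  then show "\<forall>i<D. \<forall>j<D. A $$ (j,i) = cnj (A $$ (i,j))"
    by (metis A mat_adjoint_index carrier_matD(1,2))
next
  assume herm: "\<forall>i<D. \<forall>j<D. A $$ (j,i) = cnj (A $$ (i,j))"
  show "mat_adjoint A = A"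
  proof (rule eq_matI)
    fix i j assume "i < dim_row A" "j < dim_col A"
    then show "mat_adjoint A $$ (i,j) = A $$ (i,j)"
      using A herm[rule_format, of i j] by simp
  qed (use A in auto)
qed

lemma hermitian_mat_diag_real:
  "hermitian_mat D A \<Longrightarrow> j < D \<Longrightarrow> A $$ (j,j) = of_real (Re (A $$ (j,j)))"
  unfolding hermitian_mat_def by (metis Reals_cnj_iff of_real_Re)

lemma hermitian_matD:
  "hermitian_mat D A \<Longrightarrow> i < D \<Longrightarrow> j < D \<Longrightarrow> A $$ (j,i) = cnj (A $$ (i,j))"
  unfolding hermitian_mat_def by blast

lemma hermitian_mat_add:
  assumes "A \<in> carrier_mat D D" "B \<in> carrier_mat D D" "hermitian_mat D A" "hermitian_mat D B"
  shows "hermitian_mat D (A + B)"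
proof (unfold hermitian_mat_def, intro allI impI)
  fix i j assume ij: "i < D" "j < D"
  then show "(A + B) $$ (j,i) = cnj ((A + B) $$ (i,j))"
    using assms(1,2) hermitian_matD[OF assms(3) ij] hermitian_matD[OF assms(4) ij] by simp
qed

lemma hermitian_mat_diff:
  assumes "A \<in> carrier_mat D D" "B \<in> carrier_mat D D" "hermitian_mat D A" "hermitian_mat D B"
  shows "hermitian_mat D (A - B)"
proof (unfold hermitian_mat_def, intro allI impI)
  fix i j assume ij: "i < D" "j < D"
  then show "(A - B) $$ (j,i) = cnj ((A - B) $$ (i,j))"
    using assms(1,2) hermitian_matD[OF assms(3) ij] hermitian_matD[OF assms(4) ij] by simp
qed

lemma hermitian_mat_smult:
  assumes "A \<in> carrier_mat D D" "hermitian_mat D A"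
  shows "hermitian_mat D (of_real r \<cdot>\<^sub>m A)"
proof (unfold hermitian_mat_def, intro allI impI)
  fix i j assume ij: "i < D" "j < D"
  then show "(of_real r \<cdot>\<^sub>m A) $$ (j,i) = cnj ((of_real r \<cdot>\<^sub>m A) $$ (i,j))"
    using assms(1) hermitian_matD[OF assms(2) ij] by simp
qed

lemma hermitian_mat_one: "hermitian_mat D (1\<^sub>m D)"
  unfolding hermitian_mat_def by simp

lemma hermitian_mat_adjoint_mult:
  assumes a: "a \<in> carrier_mat D D"
  shows "hermitian_mat D (mat_adjoint a * a)"
  unfolding hermitian_mat_def
proof (intro allI impI)
  fix i j assume ij: "i < D" "j < D"
  have "(mat_adjoint a * a) $$ (j,i) = (\<Sum>k<D. cnj (a $$ (k,j)) * a $$ (k,i))"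
    using a ij by (simp add: scalar_prod_def lessThan_atLeast0)
  also have "\<dots> = cnj (\<Sum>k<D. cnj (a $$ (k,i)) * a $$ (k,j))"
    by (simp add: mult.commute)
  also have "(\<Sum>k<D. cnj (a $$ (k,i)) * a $$ (k,j)) = (mat_adjoint a * a) $$ (i,j)"
    using a ij by (simp add: scalar_prod_def lessThan_atLeast0)
  finally show "(mat_adjoint a * a) $$ (j,i) = cnj ((mat_adjoint a * a) $$ (i,j))" .
qed

lemma qform_cong:
  "(\<And>i. i < D \<Longrightarrow> x i = x' i) \<Longrightarrow> (\<And>i. i < D \<Longrightarrow> y i = y' i) \<Longrightarrow> qform D A x y = qform D A x' y'"
  unfolding qform_def by (intro sum.cong refl) auto

lemma qform_vec:
  assumes "A \<in> carrier_mat D D" "v \<in> carrier_vec D"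
  shows "conjugate v \<bullet> (A *\<^sub>v v) = qform D A (($) v) (($) v)"
  using assms unfolding qform_def scalar_prod_def
  by (auto simp: row_def scalar_prod_def sum_distrib_left mult.assoc intro!: sum.cong)

lemma qform_add:
  "A \<in> carrier_mat D D \<Longrightarrow> B \<in> carrier_mat D D \<Longrightarrow> qform D (A + B) x y = qform D A x y + qform D B x y"
  unfolding qform_def by (simp add: algebra_simps sum.distrib)

lemma qform_diff:
  "A \<in> carrier_mat D D \<Longrightarrow> B \<in> carrier_mat D D \<Longrightarrow> qform D (A - B) x y = qform D A x y - qform D B x y"
  unfolding qform_def by (simp add: algebra_simps sum_subtractf)

lemma qform_smult: "A \<in> carrier_mat D D \<Longrightarrow> qform D (c \<cdot>\<^sub>m A) x y = c * qform D A x y"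
  unfolding qform_def by (simp add: algebra_simps sum_distrib_left)

lemma qform_one: "qform D (1\<^sub>m D) x x = of_real (sqnorm D x)"
proof -
  have "qform D (1\<^sub>m D) x x = (\<Sum>i<D. cnj (x i) * x i)"
    unfolding qform_def by (simp add: if_distrib[of "\<lambda>t. _ * t * _"] cong: if_cong)
  then show ?thesis
    unfolding sqnorm_def by (simp add: cnj_mult_self)
qed

lemma qform_scalar_one: "qform D (of_real c \<cdot>\<^sub>m 1\<^sub>m D) x x = of_real (c * sqnorm D x)"
  by (simp add: qform_smult qform_one)

lemma qform_unit_vec:
  "i < D \<Longrightarrow> j < D \<Longrightarrow> qform D A (\<lambda>k. if k = i then 1 else 0) (\<lambda>k. if k = j then 1 else 0) = A $$ (i,j)"
  unfolding qform_def
  by (simp add: if_distrib[of cnj] if_distrib[of "\<lambda>t. t * _"] if_distrib[of "\<lambda>t. _ * t"] cong: if_cong)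

lemma qform_hermitian_swap:
  assumes "hermitian_mat D A"
  shows "qform D A y x = cnj (qform D A x y)"
proof -
  have "cnj (qform D A x y) = (\<Sum>i<D. \<Sum>j<D. x i * A $$ (j,i) * cnj (y j))"
    unfolding qform_def by (auto simp: hermitian_matD[OF assms, symmetric] intro!: sum.cong)
  also have "\<dots> = qform D A y x"
    unfolding qform_def by (subst sum.swap) (simp add: algebra_simps)
  finally show ?thesis by simp
qed

lemma qform_hermitian_real:
  assumes "hermitian_mat D A"
  shows "qform D A x x = of_real (Re (qform D A x x))"
  using qform_hermitian_swap[OF assms, of x x] by (metis Reals_cnj_iff of_real_Re)

lemma qform_expand:
  "qform D A (\<lambda>i. x i + s * w i) (\<lambda>i. x i + s * w i)
   = qform D A x x + s * qform D A x w + cnj s * qform D A w x + cnj s * s * qform D A w w"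
  unfolding qform_def by (simp add: algebra_simps sum.distrib sum_distrib_left)

lemma cmod_qform_le: "cmod (qform D A x x) \<le> entry_norm D A * sqnorm D x"
proof -
  have entry_le: "cmod (x i) * cmod (x j) \<le> sqnorm D x" if "i < D" "j < D" for i j
  proof -
    have "(cmod (x i))\<^sup>2 \<le> sqnorm D x" "(cmod (x j))\<^sup>2 \<le> sqnorm D x"
      unfolding sqnorm_def using that by (auto intro!: member_le_sum)
    moreover have "2 * (cmod (x i) * cmod (x j)) \<le> (cmod (x i))\<^sup>2 + (cmod (x j))\<^sup>2"
      using sum_squares_bound[of "cmod (x i)" "cmod (x j)"] by (simp add: power2_eq_square)
    ultimately show ?thesis by linarith
  qed
  have "cmod (qform D A x x) \<le> (\<Sum>i<D. \<Sum>j<D. cmod (cnj (x i) * A $$ (i,j) * x j))"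
    unfolding qform_def by (rule order_trans[OF norm_sum sum_mono[OF norm_sum]])
  also have "\<dots> \<le> (\<Sum>i<D. \<Sum>j<D. cmod (A $$ (i,j)) * sqnorm D x)"
  proof (intro sum_mono)
    fix i j assume "i \<in> {..<D}" "j \<in> {..<D}"
    then have "cmod (A $$ (i,j)) * (cmod (x i) * cmod (x j)) \<le> cmod (A $$ (i,j)) * sqnorm D x"
      by (intro mult_left_mono entry_le) auto
    then show "cmod (cnj (x i) * A $$ (i,j) * x j) \<le> cmod (A $$ (i,j)) * sqnorm D x"
      by (simp add: norm_mult algebra_simps)
  qed
  also have "\<dots> = entry_norm D A * sqnorm D x"
    unfolding entry_norm_def by (simp add: sum_distrib_right)
  finally show ?thesis .
qed

lemma qform_mat_app: "qform D A x y = (\<Sum>i<D. cnj (x i) * mat_app D A y i)"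
  unfolding qform_def mat_app_def by (simp add: sum_distrib_left mult.assoc)

lemma mat_app_mult:
  assumes "A \<in> carrier_mat D D" "B \<in> carrier_mat D D" "i < D"
  shows "mat_app D A (mat_app D B x) i = mat_app D (A * B) x i"
proof -
  have "mat_app D A (mat_app D B x) i = (\<Sum>j<D. \<Sum>k<D. A $$ (i,j) * B $$ (j,k) * x k)"
    unfolding mat_app_def by (simp add: sum_distrib_left mult.assoc)
  also have "\<dots> = (\<Sum>k<D. \<Sum>j<D. A $$ (i,j) * B $$ (j,k) * x k)"
    by (rule sum.swap)
  also have "\<dots> = mat_app D (A * B) x i"
    unfolding mat_app_def using assms
    by (auto simp: scalar_prod_def sum_distrib_right lessThan_atLeast0 intro!: sum.cong)
  finally show ?thesis .
qed

lemma mat_app_one: "i < D \<Longrightarrow> mat_app D (1\<^sub>m D) x i = x i"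
  unfolding mat_app_def by (simp add: if_distrib[of "\<lambda>t. t * _"] cong: if_cong)

lemma qform_adjoint_mult:
  assumes a: "a \<in> carrier_mat D D"
  shows "qform D (mat_adjoint a * a) x x = of_real (sqnorm D (mat_app D a x))"
proof -
  have "qform D (mat_adjoint a * a) x x
        = (\<Sum>i<D. \<Sum>j<D. \<Sum>k<D. cnj (x i) * cnj (a $$ (k,i)) * a $$ (k,j) * x j)"
    unfolding qform_def using a
    by (auto simp: scalar_prod_def sum_distrib_left sum_distrib_right lessThan_atLeast0 algebra_simps
        intro!: sum.cong)
  also have "\<dots> = (\<Sum>k<D. \<Sum>i<D. \<Sum>j<D. cnj (x i) * cnj (a $$ (k,i)) * a $$ (k,j) * x j)"
    by (subst sum.swap) (intro sum.cong refl sum.swap)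
  also have "\<dots> = (\<Sum>k<D. cnj (mat_app D a x k) * mat_app D a x k)"
    unfolding mat_app_def by (simp add: sum_distrib_left sum_distrib_right algebra_simps)
  finally show ?thesis
    unfolding sqnorm_def by (simp add: cnj_mult_self)
qed

lemma sqnorm_unit_vec: "j < D \<Longrightarrow> sqnorm D (\<lambda>k. if k = j then 1 else 0) = 1"
  unfolding sqnorm_def by (simp add: if_distrib[of cmod] if_distrib[of "\<lambda>t. t\<^sup>2"] cong: if_cong)

lemma adjoint_mult_diag_pos:
  assumes X: "X \<in> carrier_mat D D" and ij: "i < D" "j < D" "X $$ (i,j) \<noteq> 0"
  shows "0 < Re ((mat_adjoint X * X) $$ (j,j))"
proof -
  define e where "e = (\<lambda>k. if k = j then 1 else (0::complex))"
  have "(mat_adjoint X * X) $$ (j,j) = of_real (sqnorm D (mat_app D X e))"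
    unfolding e_def using qform_adjoint_mult[OF X] qform_unit_vec[OF ij(2,2)] by metis
  moreover have "mat_app D X e i = X $$ (i,j)"
    unfolding mat_app_def e_def using ij(2) by (simp add: if_distrib[of "\<lambda>t. _ * t"] cong: if_cong)
  ultimately show ?thesis
    using sqnorm_pos_iff ij by auto
qed

section \<open>Positive semidefinite matrices and the Loewner order\<close>

lemma psd_mat_iff_qform:
  "psd_mat D A \<longleftrightarrow> A \<in> carrier_mat D D \<and> hermitian_mat D A \<and> (\<forall>x. 0 \<le> Re (qform D A x x))"
proof
  assume psd: "psd_mat D A"
  then have A: "A \<in> carrier_mat D D" and herm: "hermitian_mat D A"
    using hermitian_mat_iff_adjoint unfolding psd_mat_def by auto
  have "0 \<le> Re (qform D A x x)" for x
  proof -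
    have "qform D A x x = qform D A (($) (vec D x)) (($) (vec D x))"
      by (rule qform_cong) auto
    also have "\<dots> = conjugate (vec D x) \<bullet> (A *\<^sub>v vec D x)"
      using qform_vec[OF A, of "vec D x"] by simp
    finally show ?thesis
      using psd unfolding psd_mat_def by auto
  qed
  then show "A \<in> carrier_mat D D \<and> hermitian_mat D A \<and> (\<forall>x. 0 \<le> Re (qform D A x x))"
    using A herm by auto
next
  assume "A \<in> carrier_mat D D \<and> hermitian_mat D A \<and> (\<forall>x. 0 \<le> Re (qform D A x x))"
  then show "psd_mat D A"
    unfolding psd_mat_def using hermitian_mat_iff_adjoint qform_vec by auto
qed

lemma psd_matI:
  "A \<in> carrier_mat D D \<Longrightarrow> hermitian_mat D A \<Longrightarrow> (\<And>x. 0 \<le> Re (qform D A x x)) \<Longrightarrow> psd_mat D A"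
  using psd_mat_iff_qform by auto

lemma psd_matD:
  assumes "psd_mat D A"
  shows "A \<in> carrier_mat D D" "hermitian_mat D A" "0 \<le> Re (qform D A x x)"
  using assms psd_mat_iff_qform by auto

lemma pd_mat_qform_pos:
  assumes pd: "pd_mat D A" and x: "0 < sqnorm D x"
  shows "0 < Re (qform D A x x)"
proof -
  have A: "A \<in> carrier_mat D D"
    using pd unfolding pd_mat_def by auto
  obtain i where "i < D" "x i \<noteq> 0"
    using x sqnorm_pos_iff by blast
  then have "vec D x \<noteq> 0\<^sub>v D"
    by (metis index_vec index_zero_vec(1))
  then have "0 < Re (conjugate (vec D x) \<bullet> (A *\<^sub>v vec D x))"
    using pd unfolding pd_mat_def by auto
  also have "conjugate (vec D x) \<bullet> (A *\<^sub>v vec D x) = qform D A (($) (vec D x)) (($) (vec D x))"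
    by (rule qform_vec[OF A]) simp
  also have "\<dots> = qform D A x x"
    by (rule qform_cong) auto
  finally show ?thesis .
qed

lemma pd_imp_psd_mat:
  assumes "pd_mat D A"
  shows "psd_mat D A"
proof (rule psd_matI)
  show "A \<in> carrier_mat D D" "hermitian_mat D A"
    using assms hermitian_mat_iff_adjoint unfolding pd_mat_def by auto
  show "0 \<le> Re (qform D A x x)" for x
  proof (cases "0 < sqnorm D x")
    case False
    then have "\<forall>i<D. x i = 0"
      using sqnorm_pos_iff by blast
    then show ?thesis
      unfolding qform_def by simp
  qed (use pd_mat_qform_pos[OF assms] in \<open>auto intro: less_imp_le\<close>)
qed

lemma qform_cauchy_schwarz:
  assumes psd: "psd_mat D A"
  shows "(cmod (qform D A w x))\<^sup>2 \<le> Re (qform D A w w) * Re (qform D A x x)"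
proof -
  have herm: "hermitian_mat D A"
    using psd by (rule psd_matD)
  define a where "a = Re (qform D A x x)"
  define b where "b = Re (qform D A w w)"
  define g where "g = qform D A w x"
  have b: "0 \<le> b"
    unfolding b_def using psd by (rule psd_matD)
  have Fxx: "qform D A x x = of_real a"
    unfolding a_def by (rule qform_hermitian_real[OF herm])
  have Fww: "qform D A w w = of_real b"
    unfolding b_def by (rule qform_hermitian_real[OF herm])
  have Fxw: "qform D A x w = cnj g"
    unfolding g_def by (rule qform_hermitian_swap[OF herm])
  have "0 \<le> a - 2 * t * (cmod g)\<^sup>2 + t\<^sup>2 * (cmod g)\<^sup>2 * b" for t :: real
  proof -
    define s where "s = - of_real t * g"
    have "0 \<le> Re (qform D A (\<lambda>i. x i + s * w i) (\<lambda>i. x i + s * w i))"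
      using psd by (rule psd_matD)
    also have "\<dots> = a - 2 * t * (cmod g)\<^sup>2 + t\<^sup>2 * (cmod g)\<^sup>2 * b"
      unfolding qform_expand Fxx Fww Fxw g_def[symmetric] s_def
      using cmod_power2[of g] by (simp add: algebra_simps power2_eq_square)
    finally show ?thesis .
  qed
  then have "(cmod g)\<^sup>2 \<le> a * b"
    by (rule quadratic_nonneg_imp_le[OF b])
  then show ?thesis
    unfolding a_def b_def g_def by (simp add: mult.commute)
qed

lemma psd_mat_add: "psd_mat D A \<Longrightarrow> psd_mat D B \<Longrightarrow> psd_mat D (A + B)"
  using psd_matD by (intro psd_matI) (auto simp: qform_add intro!: hermitian_mat_add)

lemma psd_mat_smult: "0 \<le> r \<Longrightarrow> psd_mat D A \<Longrightarrow> psd_mat D (of_real r \<cdot>\<^sub>m A)"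
  using psd_matD by (intro psd_matI) (auto simp: qform_smult intro!: hermitian_mat_smult)

lemma psd_mat_zero: "psd_mat D (0\<^sub>m D D)"
  by (intro psd_matI) (auto simp: qform_def hermitian_mat_def)

lemma psd_mat_one: "psd_mat D (1\<^sub>m D)"
  by (intro psd_matI) (auto simp: qform_one hermitian_mat_one sqnorm_nonneg)

lemma psd_mat_adjoint_mult: "a \<in> carrier_mat D D \<Longrightarrow> psd_mat D (mat_adjoint a * a)"
  by (intro psd_matI) (auto simp: qform_adjoint_mult hermitian_mat_adjoint_mult sqnorm_nonneg)

lemma psd_mat_diag_pos:
  assumes psd: "psd_mat D A" and ij: "i < D" "j < D" and nz: "A $$ (i,j) \<noteq> 0"
  shows "0 < Re (A $$ (j,j))"
proof -
  define e where "e = (\<lambda>l k :: nat. if k = l then 1 else (0::complex))"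
  have "(cmod (A $$ (j,i)))\<^sup>2 \<le> Re (A $$ (j,j)) * Re (A $$ (i,i))"
    using qform_cauchy_schwarz[OF psd, of "e j" "e i"] unfolding e_def
    by (simp add: qform_unit_vec ij)
  moreover have "A $$ (j,i) \<noteq> 0"
    using hermitian_matD[OF psd_matD(2)[OF psd] ij] nz by simp
  moreover have "0 \<le> Re (A $$ (j,j))"
    using psd_matD(3)[OF psd, of "e j"] unfolding e_def by (simp add: qform_unit_vec ij)
  ultimately show ?thesis
    by (cases "Re (A $$ (j,j)) = 0") auto
qed

definition loewner_le :: "nat \<Rightarrow> complex mat \<Rightarrow> complex mat \<Rightarrow> bool" where
  "loewner_le D A B \<longleftrightarrow> A \<in> carrier_mat D D \<and> B \<in> carrier_mat D D \<and> psd_mat D (B - A)"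

lemma loewner_ge_iff_le:
  "A \<in> carrier_mat D D \<Longrightarrow> B \<in> carrier_mat D D \<Longrightarrow> loewner_ge D A B \<longleftrightarrow> loewner_le D B A"
  unfolding loewner_ge_def loewner_le_def by auto

lemma loewner_le_carrier:
  "loewner_le D A B \<Longrightarrow> A \<in> carrier_mat D D" "loewner_le D A B \<Longrightarrow> B \<in> carrier_mat D D"
  unfolding loewner_le_def by auto

lemma loewner_le_qform: "loewner_le D A B \<Longrightarrow> Re (qform D A x x) \<le> Re (qform D B x x)"
  unfolding loewner_le_def using psd_matD(3)[of D "B - A" x] by (simp add: qform_diff)

lemma loewner_leI:
  assumes "A \<in> carrier_mat D D" "B \<in> carrier_mat D D" "hermitian_mat D A" "hermitian_mat D B"
    and "\<And>x. Re (qform D A x x) \<le> Re (qform D B x x)"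
  shows "loewner_le D A B"
  unfolding loewner_le_def using assms by (auto intro!: psd_matI hermitian_mat_diff simp: qform_diff)

lemma loewner_le_refl:
  assumes "A \<in> carrier_mat D D"
  shows "loewner_le D A A"
  unfolding loewner_le_def using assms psd_mat_zero by simp

lemma loewner_le_trans [trans]: "loewner_le D A B \<Longrightarrow> loewner_le D B C \<Longrightarrow> loewner_le D A C"
proof -
  assume AB: "loewner_le D A B" and BC: "loewner_le D B C"
  have "C - A = (C - B) + (B - A)"
    using loewner_le_carrier[OF AB] loewner_le_carrier[OF BC] by auto
  then show ?thesis
    using AB BC unfolding loewner_le_def by (auto intro: psd_mat_add)
qed

lemma loewner_le_smult:
  assumes r: "0 \<le> r" and AB: "loewner_le D A B"
  shows "loewner_le D (of_real r \<cdot>\<^sub>m A) (of_real r \<cdot>\<^sub>m B)"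
proof -
  have "(of_real r \<cdot>\<^sub>m B) - (of_real r \<cdot>\<^sub>m A) = of_real r \<cdot>\<^sub>m (B - A)"
    using loewner_le_carrier[OF AB] by (intro eq_matI) (auto simp: algebra_simps)
  then show ?thesis
    using AB r unfolding loewner_le_def by (auto intro: psd_mat_smult)
qed

lemma loewner_le_diff:
  assumes AB: "loewner_le D A B" and CE: "loewner_le D C E"
  shows "loewner_le D (A - E) (B - C)"
proof -
  have "(B - C) - (A - E) = (B - A) + (E - C)"
    using loewner_le_carrier[OF AB] loewner_le_carrier[OF CE] by (intro eq_matI) auto
  then show ?thesis
    using AB CE unfolding loewner_le_def by (auto intro: psd_mat_add simp: minus_carrier_mat)
qed

lemma psd_mat_loewner_le: "loewner_le D A B \<Longrightarrow> psd_mat D A \<Longrightarrow> psd_mat D B"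
proof -
  assume AB: "loewner_le D A B" and psd: "psd_mat D A"
  have "B = (B - A) + A"
    using loewner_le_carrier[OF AB] by auto
  then show ?thesis
    using psd_mat_add[OF _ psd, of "B - A"] AB unfolding loewner_le_def by metis
qed

lemma scalar_one_loewner_le: "c \<le> d \<Longrightarrow> loewner_le D (of_real c \<cdot>\<^sub>m 1\<^sub>m D) (of_real d \<cdot>\<^sub>m 1\<^sub>m D)"
  by (rule loewner_leI)
    (auto simp: qform_scalar_one sqnorm_nonneg mult_right_mono intro!: hermitian_mat_smult hermitian_mat_one)

lemma hermitian_loewner_le_entry_norm:
  assumes "A \<in> carrier_mat D D" "hermitian_mat D A"
  shows "loewner_le D A (of_real (entry_norm D A) \<cdot>\<^sub>m 1\<^sub>m D)"
proof (rule loewner_leI)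
  show "Re (qform D A x x) \<le> Re (qform D (of_real (entry_norm D A) \<cdot>\<^sub>m 1\<^sub>m D) x x)" for x
    using complex_Re_le_cmod[of "qform D A x x"] cmod_qform_le[of D A x]
    by (simp add: qform_scalar_one)
qed (use assms in \<open>auto intro: hermitian_mat_smult hermitian_mat_one\<close>)

lemma pd_mat_right_inverse:
  assumes pd: "pd_mat D Q"
  obtains B where "B \<in> carrier_mat D D" "Q * B = 1\<^sub>m D"
proof -
  have Q: "Q \<in> carrier_mat D D"
    using pd unfolding pd_mat_def by auto
  have "det Q \<noteq> 0"
  proof
    assume "det Q = 0"
    then obtain v where v: "v \<in> carrier_vec D" "v \<noteq> 0\<^sub>v D" "Q *\<^sub>v v = 0\<^sub>v D"
      using det_0_iff_vec_prod_zero[OF Q] by auto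
    then have "0 < Re (conjugate v \<bullet> (Q *\<^sub>v v))"
      using pd unfolding pd_mat_def by auto
    then show False
      using v by simp
  qed
  then have "Q \<in> Units (ring_mat TYPE(complex) D D)"
    by (rule det_non_zero_imp_unit[OF Q])
  then have "mat_inverse Q \<noteq> None"
    using mat_inverse(1)[OF Q, of D] by blast
  then show ?thesis
    using that mat_inverse(2)[OF Q] by fastforce
qed

lemma psd_mat_right_inverse_sqnorm_le:
  assumes psd: "psd_mat D Q" and B: "B \<in> carrier_mat D D" and QB: "Q * B = 1\<^sub>m D"
  shows "sqnorm D x \<le> entry_norm D B * Re (qform D Q x x)"
proof -
  have Q: "Q \<in> carrier_mat D D" and herm: "hermitian_mat D Q"
    using psd by (auto dest: psd_matD)
  define w where "w = mat_app D B x"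
  have Qw: "mat_app D Q w i = x i" if "i < D" for i
    unfolding w_def using mat_app_mult[OF Q B that] QB mat_app_one[OF that] by simp
  have "qform D Q w x = cnj (qform D Q x w)"
    by (rule qform_hermitian_swap[OF herm])
  also have "qform D Q x w = of_real (sqnorm D x)"
    unfolding qform_mat_app sqnorm_def using Qw by (simp add: cnj_mult_self)
  finally have Fwx: "qform D Q w x = of_real (sqnorm D x)"
    by simp
  have "qform D Q w w = (\<Sum>i<D. cnj (w i) * x i)"
    unfolding qform_mat_app using Qw by simp
  also have "\<dots> = cnj (qform D B x x)"
    unfolding qform_mat_app w_def by (simp add: mult.commute)
  finally have Fww: "Re (qform D Q w w) \<le> entry_norm D B * sqnorm D x"
    using complex_Re_le_cmod[of "qform D B x x"] cmod_qform_le[of D B x] by simp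
  have "(sqnorm D x)\<^sup>2 \<le> Re (qform D Q w w) * Re (qform D Q x x)"
    using qform_cauchy_schwarz[OF psd, of w x] Fwx by simp
  also have "\<dots> \<le> (entry_norm D B * sqnorm D x) * Re (qform D Q x x)"
    using Fww psd_matD(3)[OF psd] by (rule mult_right_mono)
  finally have "sqnorm D x * sqnorm D x \<le> sqnorm D x * (entry_norm D B * Re (qform D Q x x))"
    by (simp add: power2_eq_square algebra_simps)
  then show ?thesis
    using sqnorm_nonneg[of D x] entry_norm_nonneg[of D B] psd_matD(3)[OF psd, of x]
    by (cases "sqnorm D x = 0") auto
qed

lemma pd_mat_ge_scalar_one:
  assumes pd: "pd_mat D Q"
  obtains e where "0 < e" "loewner_le D (of_real e \<cdot>\<^sub>m 1\<^sub>m D) Q"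
proof -
  have Q: "Q \<in> carrier_mat D D" and psd: "psd_mat D Q" and herm: "hermitian_mat D Q"
    using pd_imp_psd_mat[OF pd] psd_matD by auto
  obtain B where B: "B \<in> carrier_mat D D" and QB: "Q * B = 1\<^sub>m D"
    using pd_mat_right_inverse[OF pd] .
  define c where "c = entry_norm D B"
  have c: "0 \<le> c"
    unfolding c_def by (rule entry_norm_nonneg)
  define e where "e = 1 / (c + 1)"
  have "loewner_le D (of_real e \<cdot>\<^sub>m 1\<^sub>m D) Q"
  proof (rule loewner_leI)
    fix x
    have "sqnorm D x \<le> (c + 1) * Re (qform D Q x x)"
      using psd_mat_right_inverse_sqnorm_le[OF psd B QB, of x] psd_matD(3)[OF psd, of x]
      unfolding c_def by (simp add: algebra_simps)
    then show "Re (qform D (of_real e \<cdot>\<^sub>m 1\<^sub>m D) x x) \<le> Re (qform D Q x x)"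
      unfolding qform_scalar_one e_def using c by (simp add: field_simps)
  qed (use Q herm in \<open>auto intro: hermitian_mat_smult hermitian_mat_one\<close>)
  moreover have "0 < e"
    unfolding e_def using c by simp
  ultimately show ?thesis
    using that by blast
qed

definition rank_one_mat :: "nat \<Rightarrow> (nat \<Rightarrow> complex) \<Rightarrow> complex mat" where
  "rank_one_mat D c = mat D D (\<lambda>(k,l). c k * cnj (c l))"

lemma hermitian_rank_one_mat: "hermitian_mat D (rank_one_mat D c)"
  unfolding hermitian_mat_def rank_one_mat_def by simp

lemma rank_one_mat_eq_adjoint_mult:
  obtains b where "b \<in> carrier_mat D D" "rank_one_mat D c = mat_adjoint b * b"
proof
  define b where "b = mat D D (\<lambda>(r,l). if r = 0 then cnj (c l) else 0)"
  show b: "b \<in> carrier_mat D D"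
    unfolding b_def by simp
  show "rank_one_mat D c = mat_adjoint b * b"
  proof (rule eq_matI)
    fix k l assume "k < dim_row (mat_adjoint b * b)" "l < dim_col (mat_adjoint b * b)"
    then have kl: "k < D" "l < D"
      using b by auto
    then have "(mat_adjoint b * b) $$ (k,l) = (\<Sum>r\<in>{0..<D}. cnj (b $$ (r,k)) * b $$ (r,l))"
      using b by (simp add: scalar_prod_def)
    also have "\<dots> = (\<Sum>r\<in>{0..<D}. if r = 0 then c k * cnj (c l) else 0)"
      using kl unfolding b_def by (intro sum.cong refl) auto
    finally show "rank_one_mat D c $$ (k,l) = (mat_adjoint b * b) $$ (k,l)"
      using kl unfolding rank_one_mat_def by simp
  qed (use b in \<open>auto simp: rank_one_mat_def\<close>)
qed

lemma rank_one_mat_qform: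
  "qform D (rank_one_mat D c) x x = of_real ((cmod (\<Sum>l<D. cnj (c l) * x l))\<^sup>2)"
proof -
  have "qform D (rank_one_mat D c) x x = (\<Sum>k<D. cnj (x k) * c k) * (\<Sum>l<D. cnj (c l) * x l)"
    unfolding qform_def rank_one_mat_def sum_product by (intro sum.cong refl) (simp add: algebra_simps)
  also have "(\<Sum>k<D. cnj (x k) * c k) = cnj (\<Sum>l<D. cnj (c l) * x l)"
    by (simp add: mult.commute)
  finally show ?thesis
    by (simp only: cnj_mult_self)
qed

text \<open>One step of a Cholesky factorisation: with \<open>c\<close> the \<open>j\<close>-th column of \<open>A\<close> and
  \<open>a = A\<^sub>j\<^sub>j > 0\<close>, the matrix \<open>A - c c\<^sup>* / a\<close> is still positive (Cauchy--Schwarz against the unit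
  vector \<open>e\<^sub>j\<close>) and has one nonzero column fewer.\<close>

lemma psd_mat_minus_rank_one_column:
  assumes psd: "psd_mat D A" and j: "j < D" and pos: "0 < Re (A $$ (j,j))"
  defines "a \<equiv> Re (A $$ (j,j))" and "c \<equiv> \<lambda>k. A $$ (k,j)"
  shows "psd_mat D (A - of_real (1 / a) \<cdot>\<^sub>m rank_one_mat D c)" (is "psd_mat D ?A'")
proof (rule psd_matI)
  have A: "A \<in> carrier_mat D D" and herm: "hermitian_mat D A"
    using psd by (auto dest: psd_matD)
  have R: "rank_one_mat D c \<in> carrier_mat D D"
    unfolding rank_one_mat_def by simp
  show "?A' \<in> carrier_mat D D"
    using R by (simp add: minus_carrier_mat)
  show "hermitian_mat D ?A'"
    using A R herm hermitian_rank_one_mat by (intro hermitian_mat_diff hermitian_mat_smult) auto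
  fix x
  define e where "e = (\<lambda>k. if k = j then 1 else (0::complex))"
  have "qform D A e x = mat_app D A x j"
    unfolding qform_mat_app e_def using j
    by (simp add: if_distrib[of cnj] if_distrib[of "\<lambda>t. t * _"] cong: if_cong)
  also have "\<dots> = (\<Sum>l<D. cnj (c l) * x l)"
    unfolding mat_app_def c_def using hermitian_matD[OF herm _ j] by simp
  finally have Fe: "qform D A e x = (\<Sum>l<D. cnj (c l) * x l)" .
  have "(cmod (qform D A e x))\<^sup>2 \<le> a * Re (qform D A x x)"
    using qform_cauchy_schwarz[OF psd, of e x] qform_unit_vec[OF j j, of A] unfolding e_def a_def by simp
  then have "(cmod (\<Sum>l<D. cnj (c l) * x l))\<^sup>2 / a \<le> Re (qform D A x x)"
    unfolding Fe using pos a_def by (simp add: field_simps)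
  then show "0 \<le> Re (qform D ?A' x x)"
    using A R by (simp add: qform_diff qform_smult rank_one_mat_qform)
qed

definition nonzero_cols :: "nat \<Rightarrow> complex mat \<Rightarrow> nat set" where
  "nonzero_cols D A = {j. j < D \<and> (\<exists>i<D. A $$ (i,j) \<noteq> 0)}"

lemma nonzero_cols_minus_rank_one_column:
  assumes A: "A \<in> carrier_mat D D" and herm: "hermitian_mat D A" and j: "j < D"
    and pos: "0 < Re (A $$ (j,j))"
  defines "a \<equiv> Re (A $$ (j,j))" and "c \<equiv> \<lambda>k. A $$ (k,j)"
  shows "nonzero_cols D (A - of_real (1 / a) \<cdot>\<^sub>m rank_one_mat D c) \<subseteq> nonzero_cols D A - {j}"
    (is "nonzero_cols D ?A' \<subseteq> _")
proof
  have cnj_c: "cnj (c l) = A $$ (j,l)" if "l < D" for l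
    unfolding c_def using hermitian_matD[OF herm that j] by simp
  fix l assume "l \<in> nonzero_cols D ?A'"
  then obtain k where kl: "k < D" "l < D" "?A' $$ (k,l) \<noteq> 0"
    unfolding nonzero_cols_def by auto
  have A'kl: "?A' $$ (k,l) = A $$ (k,l) - of_real (1/a) * (c k * cnj (c l))"
    unfolding rank_one_mat_def using A kl by simp
  have "l \<noteq> j"
  proof
    assume "l = j"
    then have "?A' $$ (k,l) = A $$ (k,j) - of_real (1/a) * (A $$ (k,j) * of_real a)"
      using A'kl cnj_c[OF j] hermitian_mat_diag_real[OF herm j] unfolding c_def a_def by simp
    also have "\<dots> = 0"
      using pos unfolding a_def by (simp add: field_simps)
    finally show False
      using kl by simp
  qed
  moreover have "l \<in> nonzero_cols D A"
  proof (rule ccontr)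
    assume "l \<notin> nonzero_cols D A"
    then have "\<forall>i<D. A $$ (i,l) = 0"
      using kl unfolding nonzero_cols_def by auto
    then have "?A' $$ (k,l) = 0"
      using A'kl cnj_c[OF kl(2)] j kl by simp
    then show False
      using kl by simp
  qed
  ultimately show "l \<in> nonzero_cols D A - {j}"
    by simp
qed

lemma psd_mat_split_rank_one:
  assumes psd: "psd_mat D A" and nz: "A \<noteq> 0\<^sub>m D D"
  obtains A' r c where "psd_mat D A'" "0 < r" "A = A' + of_real r \<cdot>\<^sub>m rank_one_mat D c"
    "card (nonzero_cols D A') < card (nonzero_cols D A)"
proof -
  have A: "A \<in> carrier_mat D D" and herm: "hermitian_mat D A"
    using psd by (auto dest: psd_matD)
  obtain i j where ij: "i < D" "j < D" "A $$ (i,j) \<noteq> 0"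
    using nonzero_mat_obtain_entry[OF A nz] .
  define a where "a = Re (A $$ (j,j))"
  define c where "c = (\<lambda>k. A $$ (k,j))"
  define A' where "A' = A - of_real (1 / a) \<cdot>\<^sub>m rank_one_mat D c"
  have pos: "0 < Re (A $$ (j,j))"
    using psd_mat_diag_pos[OF psd ij] .
  have "nonzero_cols D A' \<subseteq> nonzero_cols D A - {j}"
    unfolding A'_def a_def c_def by (rule nonzero_cols_minus_rank_one_column[OF A herm ij(2) pos])
  moreover have "j \<in> nonzero_cols D A" "finite (nonzero_cols D A)"
    using ij unfolding nonzero_cols_def by auto
  ultimately have "card (nonzero_cols D A') < card (nonzero_cols D A)"
    by (meson card_Diff1_less card_mono finite_Diff le_less_trans)
  moreover have "psd_mat D A'"
    unfolding A'_def a_def c_def by (rule psd_mat_minus_rank_one_column[OF psd ij(2) pos])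
  moreover have "A = A' + of_real (1 / a) \<cdot>\<^sub>m rank_one_mat D c"
    unfolding A'_def using A by (intro eq_matI) (auto simp: rank_one_mat_def)
  moreover have "0 < 1 / a"
    using pos unfolding a_def by simp
  ultimately show ?thesis
    using that by blast
qed

section \<open>Schwarz maps are positive\<close>

lemma linear_on_Mat_closed: "linear_on_Mat D \<phi> \<Longrightarrow> A \<in> carrier_mat D D \<Longrightarrow> \<phi> A \<in> carrier_mat D D"
  unfolding linear_on_Mat_def by blast

lemma linear_on_Mat_add:
  "linear_on_Mat D \<phi> \<Longrightarrow> A \<in> carrier_mat D D \<Longrightarrow> B \<in> carrier_mat D D \<Longrightarrow> \<phi> (A + B) = \<phi> A + \<phi> B"
  unfolding linear_on_Mat_def by blast

lemma linear_on_Mat_smult: "linear_on_Mat D \<phi> \<Longrightarrow> A \<in> carrier_mat D D \<Longrightarrow> \<phi> (c \<cdot>\<^sub>m A) = c \<cdot>\<^sub>m \<phi> A"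
  unfolding linear_on_Mat_def by blast

lemma linear_on_Mat_diff:
  assumes lin: "linear_on_Mat D \<phi>" and A: "A \<in> carrier_mat D D" and B: "B \<in> carrier_mat D D"
  shows "\<phi> (A - B) = \<phi> A - \<phi> B"
proof -
  have "A - B = A + (-1) \<cdot>\<^sub>m B"
    using A B by (intro eq_matI) auto
  then have "\<phi> (A - B) = \<phi> A + (-1) \<cdot>\<^sub>m \<phi> B"
    using linear_on_Mat_add[OF lin A] linear_on_Mat_smult[OF lin B] B by simp
  also have "\<dots> = \<phi> A - \<phi> B"
    using linear_on_Mat_closed[OF lin A] linear_on_Mat_closed[OF lin B] by (intro eq_matI) auto
  finally show ?thesis .
qed

lemma linear_on_Mat_zero:
  assumes lin: "linear_on_Mat D \<phi>"
  shows "\<phi> (0\<^sub>m D D) = 0\<^sub>m D D"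
proof -
  have "\<phi> (0\<^sub>m D D) = 0 \<cdot>\<^sub>m \<phi> (0\<^sub>m D D)"
    using linear_on_Mat_smult[OF lin, of "0\<^sub>m D D" 0] by simp
  also have "\<dots> = 0\<^sub>m D D"
    using linear_on_Mat_closed[OF lin, of "0\<^sub>m D D"] by (intro eq_matI) auto
  finally show ?thesis .
qed

lemma schwarz_map_linear: "schwarz_map D \<phi> \<Longrightarrow> linear_on_Mat D \<phi>"
  unfolding schwarz_map_def by blast

lemma schwarz_map_adjoint_mult_le:
  assumes s: "schwarz_map D \<phi>" and a: "a \<in> carrier_mat D D"
  shows "loewner_le D (mat_adjoint (\<phi> a) * \<phi> a) (\<phi> (mat_adjoint a * a))"
  using s a loewner_ge_iff_le linear_on_Mat_closed[OF schwarz_map_linear[OF s]]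
  unfolding schwarz_map_def by simp

lemma schwarz_map_adjoint_mult_psd:
  assumes s: "schwarz_map D \<phi>" and a: "a \<in> carrier_mat D D"
  shows "psd_mat D (\<phi> (mat_adjoint a * a))"
  using schwarz_map_adjoint_mult_le[OF s a]
    psd_mat_adjoint_mult[OF linear_on_Mat_closed[OF schwarz_map_linear[OF s] a]]
  by (rule psd_mat_loewner_le)

lemma schwarz_map_psd:
  assumes s: "schwarz_map D \<phi>" and psd: "psd_mat D A"
  shows "psd_mat D (\<phi> A)"
  using psd
proof (induction "card (nonzero_cols D A)" arbitrary: A rule: less_induct)
  case less
  have lin: "linear_on_Mat D \<phi>"
    using s by (rule schwarz_map_linear)
  show ?case
  proof (cases "A = 0\<^sub>m D D")
    case True
    then show ?thesis
      using linear_on_Mat_zero[OF lin] psd_mat_zero by simp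
  next
    case False
    then obtain A' r c where A': "psd_mat D A'" and r: "0 < r"
      and A: "A = A' + of_real r \<cdot>\<^sub>m rank_one_mat D c"
      and fewer: "card (nonzero_cols D A') < card (nonzero_cols D A)"
      using psd_mat_split_rank_one[OF less.prems] by blast
    obtain b where b: "b \<in> carrier_mat D D" "rank_one_mat D c = mat_adjoint b * b"
      by (rule rank_one_mat_eq_adjoint_mult)
    have "\<phi> A = \<phi> A' + of_real r \<cdot>\<^sub>m \<phi> (rank_one_mat D c)"
      unfolding A using linear_on_Mat_add[OF lin] linear_on_Mat_smult[OF lin] psd_matD(1)[OF A'] b
      by (metis adjoint_mult_carrier smult_carrier_mat)
    moreover have "psd_mat D (\<phi> A')"
      using less.hyps[OF fewer A'] .
    moreover have "psd_mat D (of_real r \<cdot>\<^sub>m \<phi> (rank_one_mat D c))"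
      using schwarz_map_adjoint_mult_psd[OF s b(1)] b(2) r by (intro psd_mat_smult) auto
    ultimately show ?thesis
      by (simp add: psd_mat_add)
  qed
qed

lemma schwarz_map_mono:
  assumes s: "schwarz_map D \<phi>" and AB: "loewner_le D A B"
  shows "loewner_le D (\<phi> A) (\<phi> B)"
proof -
  have lin: "linear_on_Mat D \<phi>"
    using s by (rule schwarz_map_linear)
  have A: "A \<in> carrier_mat D D" and B: "B \<in> carrier_mat D D"
    using AB by (auto dest: loewner_le_carrier)
  have "psd_mat D (\<phi> (B - A))"
    using schwarz_map_psd[OF s] AB unfolding loewner_le_def by auto
  then show ?thesis
    unfolding loewner_le_def
    using linear_on_Mat_diff[OF lin B A] linear_on_Mat_closed[OF lin A] linear_on_Mat_closed[OF lin B]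
    by simp
qed

lemma schwarz_map_comp:
  assumes s1: "schwarz_map D \<phi>" and s2: "schwarz_map D \<psi>"
  shows "schwarz_map D (\<phi> \<circ> \<psi>)"
  unfolding schwarz_map_def
proof (intro conjI ballI)
  have lin1: "linear_on_Mat D \<phi>" and lin2: "linear_on_Mat D \<psi>"
    using s1 s2 by (auto intro: schwarz_map_linear)
  then show "linear_on_Mat D (\<phi> \<circ> \<psi>)"
    unfolding linear_on_Mat_def by auto
  fix a :: "complex mat" assume a: "a \<in> carrier_mat D D"
  have \<psi>a: "\<psi> a \<in> carrier_mat D D"
    using linear_on_Mat_closed[OF lin2 a] .
  have "loewner_le D (mat_adjoint (\<phi> (\<psi> a)) * \<phi> (\<psi> a)) (\<phi> (mat_adjoint (\<psi> a) * \<psi> a))"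
    using schwarz_map_adjoint_mult_le[OF s1 \<psi>a] .
  also have "loewner_le D \<dots> (\<phi> (\<psi> (mat_adjoint a * a)))"
    using schwarz_map_mono[OF s1 schwarz_map_adjoint_mult_le[OF s2 a]] .
  finally show "loewner_ge D ((\<phi> \<circ> \<psi>) (mat_adjoint a * a)) (mat_adjoint ((\<phi> \<circ> \<psi>) a) * (\<phi> \<circ> \<psi>) a)"
    using loewner_ge_iff_le loewner_le_carrier by auto
qed

lemma schwarz_map_id: "schwarz_map D id"
  unfolding schwarz_map_def linear_on_Mat_def
  by (auto simp: loewner_ge_iff_le loewner_le_refl)

lemma schwarz_map_funpow: "schwarz_map D \<phi> \<Longrightarrow> schwarz_map D (\<phi> ^^ k)"
  by (induction k) (auto simp: schwarz_map_id schwarz_map_comp)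

lemma linear_on_Mat_funpow_eigen:
  assumes lin: "linear_on_Mat D \<phi>" and X: "X \<in> carrier_mat D D" and eigen: "\<phi> X = l \<cdot>\<^sub>m X"
  shows "(\<phi> ^^ k) X = l ^ k \<cdot>\<^sub>m X"
proof (induction k)
  case 0
  show ?case
    using X by (intro eq_matI) auto
next
  case (Suc k)
  have "(\<phi> ^^ Suc k) X = l ^ k \<cdot>\<^sub>m (l \<cdot>\<^sub>m X)"
    using Suc linear_on_Mat_smult[OF lin X] eigen by simp
  also have "\<dots> = l ^ Suc k \<cdot>\<^sub>m X"
    using X by (intro eq_matI) auto
  finally show ?case .
qed

lemma linear_on_Mat_funpow_eigenvalue:
  assumes lin: "linear_on_Mat D \<phi>" and eigen: "map_eigenvalue D \<phi> l"
  shows "map_eigenvalue D (\<phi> ^^ k) (l ^ k)"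
proof -
  obtain X where X: "X \<in> carrier_mat D D" "X \<noteq> 0\<^sub>m D D" "\<phi> X = l \<cdot>\<^sub>m X"
    using eigen unfolding map_eigenvalue_def by blast
  then show ?thesis
    unfolding map_eigenvalue_def using linear_on_Mat_funpow_eigen[OF lin X(1,3)] by blast
qed

lemma loewner_le_one_of_adjoint_mult_le:
  assumes P: "P \<in> carrier_mat D D" and herm: "hermitian_mat D P"
    and le: "loewner_le D (mat_adjoint P * P) P"
  shows "loewner_le D P (1\<^sub>m D)"
proof (rule loewner_leI[OF P _ herm hermitian_mat_one])
  fix x
  define u where "u = mat_app D P x"
  have "sqnorm D u \<le> Re (qform D P x x)"
    using loewner_le_qform[OF le, of x] qform_adjoint_mult[OF P] unfolding u_def by simp
  moreover have "sqnorm D (\<lambda>i. x i - u i) = sqnorm D x - 2 * Re (qform D P x x) + sqnorm D u"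
    unfolding sqnorm_def qform_mat_app u_def cmod_power2
    by (simp add: power2_eq_square algebra_simps sum.distrib sum_subtractf sum_distrib_left)
  ultimately show "Re (qform D P x x) \<le> Re (qform D (1\<^sub>m D) x x)"
    using sqnorm_nonneg[of D "\<lambda>i. x i - u i"] by (simp add: qform_one)
qed simp

lemma schwarz_map_one_le:
  assumes s: "schwarz_map D \<phi>"
  shows "loewner_le D (\<phi> (1\<^sub>m D)) (1\<^sub>m D)"
proof (rule loewner_le_one_of_adjoint_mult_le)
  show "\<phi> (1\<^sub>m D) \<in> carrier_mat D D"
    using linear_on_Mat_closed[OF schwarz_map_linear[OF s]] by simp
  show "hermitian_mat D (\<phi> (1\<^sub>m D))"
    using schwarz_map_psd[OF s psd_mat_one] by (rule psd_matD)
  show "loewner_le D (mat_adjoint (\<phi> (1\<^sub>m D)) * \<phi> (1\<^sub>m D)) (\<phi> (1\<^sub>m D))"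
    using schwarz_map_adjoint_mult_le[OF s, of "1\<^sub>m D"] by (simp add: mat_adjoint_one)
qed

lemma schwarz_map_funpow_Suc_one_le:
  assumes s: "schwarz_map D \<phi>"
    and gap: "loewner_le D (of_real e \<cdot>\<^sub>m 1\<^sub>m D) ((\<phi> ^^ n) (1\<^sub>m D - \<phi> (1\<^sub>m D)))"
  shows "loewner_le D ((\<phi> ^^ Suc n) (1\<^sub>m D)) (of_real (1 - e) \<cdot>\<^sub>m 1\<^sub>m D)"
proof -
  have \<phi>1: "\<phi> (1\<^sub>m D) \<in> carrier_mat D D"
    using linear_on_Mat_closed[OF schwarz_map_linear[OF s]] by simp
  have sn: "schwarz_map D (\<phi> ^^ n)"
    using s by (rule schwarz_map_funpow)
  have "(\<phi> ^^ Suc n) (1\<^sub>m D) = (\<phi> ^^ n) (1\<^sub>m D) - (\<phi> ^^ n) (1\<^sub>m D - \<phi> (1\<^sub>m D))"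
  proof -
    have "1\<^sub>m D - (1\<^sub>m D - \<phi> (1\<^sub>m D)) = \<phi> (1\<^sub>m D)"
      using \<phi>1 by (intro eq_matI) auto
    then show ?thesis
      unfolding funpow_Suc_right using \<phi>1 schwarz_map_linear[OF sn]
      by (simp add: linear_on_Mat_diff[symmetric] minus_carrier_mat)
  qed
  also have "loewner_le D \<dots> (1\<^sub>m D - of_real e \<cdot>\<^sub>m 1\<^sub>m D)"
    using schwarz_map_one_le[OF sn] gap by (rule loewner_le_diff)
  also have "1\<^sub>m D - of_real e \<cdot>\<^sub>m 1\<^sub>m D = (of_real (1 - e) \<cdot>\<^sub>m 1\<^sub>m D :: complex mat)"
    by (intro eq_matI) auto
  finally show ?thesis .
qed

section \<open>Eigenvalues of Schwarz maps\<close>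

lemma schwarz_map_funpow_one_le_scalar:
  assumes s: "schwarz_map D \<phi>" and c: "0 \<le> c"
    and le: "loewner_le D (\<phi> (1\<^sub>m D)) (of_real c \<cdot>\<^sub>m 1\<^sub>m D)"
  shows "loewner_le D ((\<phi> ^^ k) (1\<^sub>m D)) (of_real (c ^ k) \<cdot>\<^sub>m 1\<^sub>m D)"
proof (induction k)
  case 0
  show ?case
    using loewner_le_refl[of "1\<^sub>m D" D] by simp
next
  case (Suc k)
  have "loewner_le D ((\<phi> ^^ Suc k) (1\<^sub>m D)) (\<phi> (of_real (c ^ k) \<cdot>\<^sub>m 1\<^sub>m D))"
    using schwarz_map_mono[OF s Suc] by simp
  also have "\<phi> (of_real (c ^ k) \<cdot>\<^sub>m 1\<^sub>m D) = of_real (c ^ k) \<cdot>\<^sub>m \<phi> (1\<^sub>m D)"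
    using linear_on_Mat_smult[OF schwarz_map_linear[OF s]] by simp
  also have "loewner_le D \<dots> (of_real (c ^ k) \<cdot>\<^sub>m (of_real c \<cdot>\<^sub>m 1\<^sub>m D))"
    by (rule loewner_le_smult[OF zero_le_power[OF c] le])
  also have "of_real (c ^ k) \<cdot>\<^sub>m (of_real c \<cdot>\<^sub>m 1\<^sub>m D) = (of_real (c ^ Suc k) \<cdot>\<^sub>m 1\<^sub>m D :: complex mat)"
    by (intro eq_matI) (auto simp: algebra_simps)
  finally show ?case .
qed

lemma schwarz_map_eigen_adjoint_mult_le:
  assumes s: "schwarz_map D \<phi>" and X: "X \<in> carrier_mat D D" and eigen: "\<phi> X = \<mu> \<cdot>\<^sub>m X"
  shows "loewner_le D (of_real ((cmod \<mu>) ^ (2 * k)) \<cdot>\<^sub>m (mat_adjoint X * X)) ((\<phi> ^^ k) (mat_adjoint X * X))"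
proof (induction k)
  case 0
  show ?case
    using loewner_le_refl[of "mat_adjoint X * X" D] X by simp
next
  case (Suc k)
  define Y where "Y = mat_adjoint X * X"
  define r where "r = (cmod \<mu>)\<^sup>2"
  have Y: "Y \<in> carrier_mat D D"
    unfolding Y_def using X by simp
  have "mat_adjoint (\<phi> X) * \<phi> X = cnj \<mu> \<cdot>\<^sub>m (mat_adjoint X * (\<mu> \<cdot>\<^sub>m X))"
    unfolding eigen mat_adjoint_smult[OF X] using X by (intro mult_smult_assoc_mat) auto
  also have "\<dots> = cnj \<mu> \<cdot>\<^sub>m (\<mu> \<cdot>\<^sub>m Y)"
    unfolding Y_def using mult_smult_distrib[OF mat_adjoint_carrier[OF X] X] by simp
  also have "\<dots> = (cnj \<mu> * \<mu>) \<cdot>\<^sub>m Y"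
    using Y by (intro eq_matI) auto
  finally have "mat_adjoint (\<phi> X) * \<phi> X = of_real r \<cdot>\<^sub>m Y"
    unfolding r_def cnj_mult_self .
  then have rY: "loewner_le D (of_real r \<cdot>\<^sub>m Y) (\<phi> Y)"
    using schwarz_map_adjoint_mult_le[OF s X] unfolding Y_def by simp
  have "(cmod \<mu>) ^ (2 * Suc k) = r ^ k * r"
    unfolding r_def by (simp add: power_mult power2_eq_square)
  then have "of_real ((cmod \<mu>) ^ (2 * Suc k)) \<cdot>\<^sub>m Y = of_real (r ^ k) \<cdot>\<^sub>m (of_real r \<cdot>\<^sub>m Y)"
    using Y by (intro eq_matI) auto
  also have "loewner_le D \<dots> (of_real (r ^ k) \<cdot>\<^sub>m \<phi> Y)"
    by (rule loewner_le_smult[OF _ rY]) (simp add: r_def)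
  also have "of_real (r ^ k) \<cdot>\<^sub>m \<phi> Y = \<phi> (of_real (r ^ k) \<cdot>\<^sub>m Y)"
    using linear_on_Mat_smult[OF schwarz_map_linear[OF s] Y] by simp
  also have "loewner_le D \<dots> ((\<phi> ^^ Suc k) Y)"
    using schwarz_map_mono[OF s Suc[folded Y_def]] unfolding r_def power_mult by simp
  finally show ?case
    unfolding Y_def .
qed

lemma schwarz_map_eigen_adjoint_mult_le_scalar:
  assumes s: "schwarz_map D \<phi>" and c: "0 \<le> c"
    and le: "loewner_le D (\<phi> (1\<^sub>m D)) (of_real c \<cdot>\<^sub>m 1\<^sub>m D)"
    and X: "X \<in> carrier_mat D D" and eigen: "\<phi> X = \<mu> \<cdot>\<^sub>m X"
  shows "loewner_le D (of_real ((cmod \<mu>) ^ (2 * k)) \<cdot>\<^sub>m (mat_adjoint X * X))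
           (of_real (entry_norm D (mat_adjoint X * X) * c ^ k) \<cdot>\<^sub>m 1\<^sub>m D)"
proof -
  define Y where "Y = mat_adjoint X * X"
  define t where "t = entry_norm D Y"
  have sk: "schwarz_map D (\<phi> ^^ k)"
    using s by (rule schwarz_map_funpow)
  have "loewner_le D (of_real ((cmod \<mu>) ^ (2 * k)) \<cdot>\<^sub>m Y) ((\<phi> ^^ k) Y)"
    unfolding Y_def using schwarz_map_eigen_adjoint_mult_le[OF s X eigen] .
  also have "loewner_le D \<dots> ((\<phi> ^^ k) (of_real t \<cdot>\<^sub>m 1\<^sub>m D))"
    unfolding t_def Y_def
    by (intro schwarz_map_mono[OF sk] hermitian_loewner_le_entry_norm hermitian_mat_adjoint_mult X
        adjoint_mult_carrier)
  also have "(\<phi> ^^ k) (of_real t \<cdot>\<^sub>m 1\<^sub>m D) = of_real t \<cdot>\<^sub>m (\<phi> ^^ k) (1\<^sub>m D)"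
    using linear_on_Mat_smult[OF schwarz_map_linear[OF sk]] by simp
  also have "loewner_le D \<dots> (of_real t \<cdot>\<^sub>m (of_real (c ^ k) \<cdot>\<^sub>m 1\<^sub>m D))"
    unfolding t_def
    by (rule loewner_le_smult[OF entry_norm_nonneg schwarz_map_funpow_one_le_scalar[OF s c le]])
  also have "of_real t \<cdot>\<^sub>m (of_real (c ^ k) \<cdot>\<^sub>m 1\<^sub>m D) = (of_real (t * c ^ k) \<cdot>\<^sub>m 1\<^sub>m D :: complex mat)"
    by (intro eq_matI) auto
  finally show ?thesis
    unfolding Y_def t_def .
qed

lemma schwarz_map_eigenvalue_bound:
  assumes s: "schwarz_map D \<phi>" and c: "0 < c"
    and le: "loewner_le D (\<phi> (1\<^sub>m D)) (of_real c \<cdot>\<^sub>m 1\<^sub>m D)"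
    and eigen: "map_eigenvalue D \<phi> \<mu>"
  shows "(cmod \<mu>)\<^sup>2 \<le> c"
proof -
  obtain X where X: "X \<in> carrier_mat D D" "X \<noteq> 0\<^sub>m D D" "\<phi> X = \<mu> \<cdot>\<^sub>m X"
    using eigen unfolding map_eigenvalue_def by blast
  obtain i j where ij: "i < D" "j < D" "X $$ (i,j) \<noteq> 0"
    using nonzero_mat_obtain_entry[OF X(1,2)] .
  define Y where "Y = mat_adjoint X * X"
  define e where "e = (\<lambda>k. if k = j then 1 else (0::complex))"
  have Y: "Y \<in> carrier_mat D D"
    unfolding Y_def using X(1) by simp
  have "((cmod \<mu>)\<^sup>2) ^ k * Re (Y $$ (j,j)) \<le> entry_norm D Y * c ^ k" for k
  proof -
    have "Re (qform D (of_real ((cmod \<mu>) ^ (2 * k)) \<cdot>\<^sub>m Y) e e)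
          \<le> Re (qform D (of_real (entry_norm D Y * c ^ k) \<cdot>\<^sub>m 1\<^sub>m D) e e)"
      unfolding Y_def
      by (rule loewner_le_qform[OF schwarz_map_eigen_adjoint_mult_le_scalar[OF s _ le X(1,3)]])
        (use c in simp)
    then show ?thesis
      using Y ij(2) unfolding qform_scalar_one e_def
      by (simp add: qform_smult qform_unit_vec sqnorm_unit_vec power_mult)
  qed
  then show ?thesis
    using le_of_power_bounded[OF c adjoint_mult_diag_pos[OF X(1) ij, folded Y_def]] by blast
qed

text \<open>Entry \<open>(i, j)\<close> of a \<open>D \<times> D\<close> matrix is coordinate \<open>i * D + j\<close> of a vector of length
  \<open>D * D\<close>; the prefix matrices let linearity expand \<open>\<phi> X\<close> over matrix units by induction.\<close>

definition mat_unit :: "nat \<Rightarrow> nat \<Rightarrow> complex mat" where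
  "mat_unit D q = mat D D (\<lambda>(i,j). if i = q div D \<and> j = q mod D then 1 else 0)"

definition mat_of_vec_prefix :: "nat \<Rightarrow> complex vec \<Rightarrow> nat \<Rightarrow> complex mat" where
  "mat_of_vec_prefix D v n = mat D D (\<lambda>(i,j). if i * D + j < n then v $ (i * D + j) else 0)"

lemma row_major_index_less:
  fixes i j D :: nat
  assumes "i < D" "j < D"
  shows "i * D + j < D * D"
proof -
  have "i * D + j < Suc i * D"
    using assms by simp
  also have "\<dots> \<le> D * D"
    using assms(1) by (intro mult_right_mono) auto
  finally show ?thesis .
qed

lemma row_major_index_bounds:
  fixes p D :: nat
  assumes "p < D * D"
  shows "p div D < D" "p mod D < D"
proof -
  show "p div D < D"
    using assms by (simp add: less_mult_imp_div_less)
  have "0 < D"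
    using assms by (cases D) auto
  then show "p mod D < D"
    by simp
qed

lemma mat_of_vec_prefix_Suc:
  assumes n: "n < D * D"
  shows "mat_of_vec_prefix D v (Suc n) = mat_of_vec_prefix D v n + (v $ n) \<cdot>\<^sub>m mat_unit D n"
proof (rule eq_matI)
  fix i j assume "i < dim_row (mat_of_vec_prefix D v n + (v $ n) \<cdot>\<^sub>m mat_unit D n)"
    "j < dim_col (mat_of_vec_prefix D v n + (v $ n) \<cdot>\<^sub>m mat_unit D n)"
  then have ij: "i < D" "j < D"
    unfolding mat_of_vec_prefix_def mat_unit_def by auto
  then have "i * D + j = n \<longleftrightarrow> i = n div D \<and> j = n mod D"
    by auto
  then show "mat_of_vec_prefix D v (Suc n) $$ (i, j)
             = (mat_of_vec_prefix D v n + (v $ n) \<cdot>\<^sub>m mat_unit D n) $$ (i, j)"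
    using ij unfolding mat_of_vec_prefix_def mat_unit_def by auto
qed (auto simp: mat_of_vec_prefix_def mat_unit_def)

lemma linear_on_Mat_mat_of_vec_prefix:
  assumes lin: "linear_on_Mat D \<phi>" and n: "n \<le> D * D" and ij: "i < D" "j < D"
  shows "\<phi> (mat_of_vec_prefix D v n) $$ (i,j) = (\<Sum>q<n. v $ q * \<phi> (mat_unit D q) $$ (i,j))"
  using n
proof (induction n)
  case 0
  have "mat_of_vec_prefix D v 0 = 0\<^sub>m D D"
    unfolding mat_of_vec_prefix_def by (intro eq_matI) auto
  then show ?case
    using linear_on_Mat_zero[OF lin] ij by simp
next
  case (Suc n)
  have M: "mat_of_vec_prefix D v n \<in> carrier_mat D D" and E: "mat_unit D n \<in> carrier_mat D D"
    unfolding mat_of_vec_prefix_def mat_unit_def by auto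
  have "\<phi> (mat_of_vec_prefix D v (Suc n)) = \<phi> (mat_of_vec_prefix D v n) + (v $ n) \<cdot>\<^sub>m \<phi> (mat_unit D n)"
    using mat_of_vec_prefix_Suc[of n D v] Suc.prems linear_on_Mat_add[OF lin M]
      linear_on_Mat_smult[OF lin E] E by simp
  then show ?case
    using Suc ij linear_on_Mat_closed[OF lin M] linear_on_Mat_closed[OF lin E] by simp
qed

definition map_matrix :: "nat \<Rightarrow> (complex mat \<Rightarrow> complex mat) \<Rightarrow> complex mat" where
  "map_matrix D \<phi> = mat (D * D) (D * D) (\<lambda>(p,q). \<phi> (mat_unit D q) $$ (p div D, p mod D))"

lemma mat_of_vec_prefix_index:
  "i < D \<Longrightarrow> j < D \<Longrightarrow> mat_of_vec_prefix D v (D * D) $$ (i,j) = v $ (i * D + j)"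
  unfolding mat_of_vec_prefix_def using row_major_index_less by simp

lemma mat_of_vec_prefix_eq_zero:
  assumes v: "v \<in> carrier_vec (D * D)" and zero: "mat_of_vec_prefix D v (D * D) = 0\<^sub>m D D"
  shows "v = 0\<^sub>v (D * D)"
proof (rule eq_vecI)
  fix p assume "p < dim_vec (0\<^sub>v (D * D) :: complex vec)"
  then have p: "p < D * D"
    by simp
  have "v $ p = mat_of_vec_prefix D v (D * D) $$ (p div D, p mod D)"
    using mat_of_vec_prefix_index[OF row_major_index_bounds[OF p]] by simp
  then show "v $ p = 0\<^sub>v (D * D) $ p"
    using zero row_major_index_bounds[OF p] p by simp
qed (use v in auto)

lemma linear_on_Mat_map_matrix:
  assumes lin: "linear_on_Mat D \<phi>" and v: "v \<in> carrier_vec (D * D)" and ij: "i < D" "j < D"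
  shows "\<phi> (mat_of_vec_prefix D v (D * D)) $$ (i,j) = (map_matrix D \<phi> *\<^sub>v v) $ (i * D + j)"
proof -
  have "\<phi> (mat_of_vec_prefix D v (D * D)) $$ (i,j) = (\<Sum>q<D * D. v $ q * \<phi> (mat_unit D q) $$ (i,j))"
    using linear_on_Mat_mat_of_vec_prefix[OF lin _ ij] by simp
  also have "\<dots> = (map_matrix D \<phi> *\<^sub>v v) $ (i * D + j)"
    using row_major_index_less[OF ij] v ij unfolding map_matrix_def
    by (simp add: scalar_prod_def lessThan_atLeast0 mult.commute)
  finally show ?thesis .
qed

lemma linear_on_Mat_has_eigenvalue:
  assumes lin: "linear_on_Mat D \<phi>" and D: "0 < D"
  obtains l where "map_eigenvalue D \<phi> l"
proof -
  have R: "map_matrix D \<phi> \<in> carrier_mat (D * D) (D * D)"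
    unfolding map_matrix_def by simp
  obtain k where "k \<in> spectrum (map_matrix D \<phi>)"
    using spectrum_non_empty[OF R] D by auto
  then obtain v where v: "v \<in> carrier_vec (D * D)" "v \<noteq> 0\<^sub>v (D * D)" "map_matrix D \<phi> *\<^sub>v v = k \<cdot>\<^sub>v v"
    using R unfolding spectrum_def eigenvalue_def eigenvector_def by auto
  define X where "X = mat_of_vec_prefix D v (D * D)"
  have X: "X \<in> carrier_mat D D"
    unfolding X_def mat_of_vec_prefix_def by simp
  have "X \<noteq> 0\<^sub>m D D"
    unfolding X_def using mat_of_vec_prefix_eq_zero[OF v(1)] v(2) by blast
  moreover have "\<phi> X = k \<cdot>\<^sub>m X"
  proof (rule eq_matI)
    fix i j assume "i < dim_row (k \<cdot>\<^sub>m X)" "j < dim_col (k \<cdot>\<^sub>m X)"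
    then have ij: "i < D" "j < D"
      using X by auto
    then show "\<phi> X $$ (i,j) = (k \<cdot>\<^sub>m X) $$ (i,j)"
      unfolding X_def using linear_on_Mat_map_matrix[OF lin v(1) ij] v(1,3) X row_major_index_less[OF ij]
      by (simp add: mat_of_vec_prefix_index X_def)
  qed (use X linear_on_Mat_closed[OF lin X] in auto)
  ultimately show ?thesis
    using that X unfolding map_eigenvalue_def by blast
qed

section \<open>The spectral radius\<close>

lemma map_spectral_radius_le:
  assumes "map_eigenvalue D \<phi> l\<^sub>0" and "\<And>l. map_eigenvalue D \<phi> l \<Longrightarrow> cmod l \<le> r"
  shows "map_spectral_radius D \<phi> \<le> r"
  unfolding map_spectral_radius_def using assms by (intro cSup_least) auto

lemma map_spectral_radius_eqI:
  assumes "map_eigenvalue D \<phi> l\<^sub>0" "cmod l\<^sub>0 = r" and "\<And>l. map_eigenvalue D \<phi> l \<Longrightarrow> cmod l \<le> r"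
  shows "map_spectral_radius D \<phi> = r"
  unfolding map_spectral_radius_def using assms by (intro cSup_eq_maximum) auto

lemma unital_schwarz_map_spectral_radius:
  assumes D: "0 < D" and s: "schwarz_map D \<phi>" and unital: "\<phi> (1\<^sub>m D) = 1\<^sub>m D"
  shows "map_spectral_radius D \<phi> = 1"
proof (rule map_spectral_radius_eqI)
  have "1\<^sub>m D \<noteq> (0\<^sub>m D D :: complex mat)"
    using D by (metis index_one_mat(1) index_zero_mat(1) zero_neq_one)
  then show "map_eigenvalue D \<phi> 1"
    unfolding map_eigenvalue_def using unital by auto
  fix l assume "map_eigenvalue D \<phi> l"
  moreover have "loewner_le D (\<phi> (1\<^sub>m D)) (of_real 1 \<cdot>\<^sub>m 1\<^sub>m D)"
    using unital loewner_le_refl[of "1\<^sub>m D" D] by simp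
  ultimately have "(cmod l)\<^sup>2 \<le> 1"
    using schwarz_map_eigenvalue_bound[OF s] by fastforce
  then show "cmod l \<le> 1"
    by (simp add: abs_square_le_1)
qed simp

lemma primitive_schwarz_map_contracts:
  assumes s: "schwarz_map D \<phi>" and prim: "primitive_map D \<phi>" and nonunital: "\<phi> (1\<^sub>m D) \<noteq> 1\<^sub>m D"
  obtains k e where "0 < k" "0 < e" "e < 1"
    "loewner_le D ((\<phi> ^^ k) (1\<^sub>m D)) (of_real (1 - e) \<cdot>\<^sub>m 1\<^sub>m D)"
proof -
  define Z where "Z = 1\<^sub>m D - \<phi> (1\<^sub>m D)"
  have \<phi>1: "\<phi> (1\<^sub>m D) \<in> carrier_mat D D"
    using linear_on_Mat_closed[OF schwarz_map_linear[OF s]] by simp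
  have "psd_mat D Z"
    using schwarz_map_one_le[OF s] unfolding loewner_le_def Z_def by simp
  moreover have "Z \<noteq> 0\<^sub>m D D"
  proof
    assume "Z = 0\<^sub>m D D"
    moreover have "1\<^sub>m D = Z + \<phi> (1\<^sub>m D)"
      unfolding Z_def using \<phi>1 by (intro eq_matI) auto
    ultimately show False
      using \<phi>1 nonunital by simp
  qed
  moreover obtain n where "\<And>A. psd_mat D A \<and> A \<noteq> 0\<^sub>m D D \<Longrightarrow> pd_mat D ((\<phi> ^^ n) A)"
    using prim unfolding primitive_map_def by blast
  ultimately obtain e where e: "0 < e" "loewner_le D (of_real e \<cdot>\<^sub>m 1\<^sub>m D) ((\<phi> ^^ n) Z)"
    using pd_mat_ge_scalar_one by blast
  define e' where "e' = min e (1 / 2)"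
  have "loewner_le D (of_real e' \<cdot>\<^sub>m 1\<^sub>m D) ((\<phi> ^^ n) Z)"
    by (rule loewner_le_trans[OF scalar_one_loewner_le e(2)]) (simp add: e'_def)
  then have "loewner_le D ((\<phi> ^^ Suc n) (1\<^sub>m D)) (of_real (1 - e') \<cdot>\<^sub>m 1\<^sub>m D)"
    unfolding Z_def by (rule schwarz_map_funpow_Suc_one_le[OF s])
  moreover have "0 < e'" "e' < 1"
    unfolding e'_def using e by auto
  ultimately show ?thesis
    using that[of "Suc n" e'] by simp
qed

lemma schwarz_map_spectral_radius_lt_one:
  assumes D: "0 < D" and s: "schwarz_map D \<phi>" and k: "0 < k" and e: "0 < e" "e < 1"
    and contracts: "loewner_le D ((\<phi> ^^ k) (1\<^sub>m D)) (of_real (1 - e) \<cdot>\<^sub>m 1\<^sub>m D)"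
  shows "map_spectral_radius D \<phi> < 1"
proof -
  have lin: "linear_on_Mat D \<phi>"
    using s by (rule schwarz_map_linear)
  define \<rho> where "\<rho> = root (2 * k) (1 - e)"
  have k2: "0 < 2 * k"
    using k by simp
  have \<rho>0: "0 \<le> \<rho>"
    unfolding \<rho>_def using e by (intro real_root_ge_zero) simp
  have \<rho>1: "\<rho> < 1"
    unfolding \<rho>_def using e k2 by (subst real_root_lt_1_iff) simp_all
  have \<rho>2: "\<rho> ^ (2 * k) = 1 - e"
    unfolding \<rho>_def using e k2 by (intro real_root_pow_pos2) simp_all
  have bound: "cmod l \<le> \<rho>" if "map_eigenvalue D \<phi> l" for l
  proof -
    have "map_eigenvalue D (\<phi> ^^ k) (l ^ k)"
      using linear_on_Mat_funpow_eigenvalue[OF lin that] .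
    then have "(cmod (l ^ k))\<^sup>2 \<le> 1 - e"
      using schwarz_map_eigenvalue_bound[OF schwarz_map_funpow[OF s] _ contracts] e by simp
    moreover have "(cmod (l ^ k))\<^sup>2 = cmod l ^ (2 * k)"
      unfolding norm_power mult.commute[of 2 k] power_mult ..
    ultimately have "cmod l ^ (2 * k) \<le> \<rho> ^ (2 * k)"
      unfolding \<rho>2 by simp
    then show ?thesis
      using \<rho>0 k2 power_mono_iff[of "cmod l" \<rho> "2 * k"] by simp
  qed
  obtain l\<^sub>0 where "map_eigenvalue D \<phi> l\<^sub>0"
    using linear_on_Mat_has_eigenvalue[OF lin D] .
  then have "map_spectral_radius D \<phi> \<le> \<rho>"
    using bound by (rule map_spectral_radius_le)
  then show ?thesis
    using \<rho>1 by simp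
qed

theorem proposition2p3:
  fixes D :: nat and \<phi> :: "complex mat \<Rightarrow> complex mat"
  assumes "D \<ge> 1"
    and "schwarz_map D \<phi>"
    and "primitive_map D \<phi>"
  shows "map_spectral_radius D \<phi> = 1 \<longleftrightarrow> \<phi> (1\<^sub>m D) = 1\<^sub>m D"
proof
  assume radius: "map_spectral_radius D \<phi> = 1"
  show "\<phi> (1\<^sub>m D) = 1\<^sub>m D"
  proof (rule ccontr)
    assume "\<phi> (1\<^sub>m D) \<noteq> 1\<^sub>m D"
    then obtain k e where "0 < k" "0 < e" "e < 1"
      "loewner_le D ((\<phi> ^^ k) (1\<^sub>m D)) (of_real (1 - e) \<cdot>\<^sub>m 1\<^sub>m D)"
      using primitive_schwarz_map_contracts[OF assms(2,3)] by blast
    then have "map_spectral_radius D \<phi> < 1"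
      using schwarz_map_spectral_radius_lt_one[OF _ assms(2)] assms(1) by simp
    then show False
      using radius by simp
  qed
next
  assume "\<phi> (1\<^sub>m D) = 1\<^sub>m D"
  then show "map_spectral_radius D \<phi> = 1"
    using unital_schwarz_map_spectral_radius assms(1,2) by simp
qed

end
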